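(* Let $K:\mathbb{N}_0\to\mathbb{N}_0$, $n\mapsto K_n$, be a scaling, let $\gamma_n$ be the number of deleted nodes, and let $P(n,K_n,\gamma_n)$ denote the probability that $\mathbb{H}(n;K_n,\gamma_n)$ is connected. (a) If $\gamma_n = o(\sqrt{n})$ and $K_n\ge 2$ for all $n$, then $\lim_{n\to\infty} P(n,K_n,\gamma_n)=1$. (b) If $\gamma_n=\Omega(\sqrt{n})$ and $\gamma_n=o(n)$, and for some sequence $\omega_n$ it holds that \[ K_n = r_2(\gamma_n)+\omega_n, \qquad\text{where } r_2(\gamma_n)=\frac{\log(\gamma_n)}{\log 2 + 1/2}, \] then $\lim_{n\to\infty} P(n,K_n,\gamma_n)=1$ provided $\lim_{n\to\infty}\omega_n=\infty$.
   Context: Random K-out graph $\mathbb{H}(n;K_n)$: on vertex set $V=\{v_1,\dots,v_n\}$ with labels $\mathcal{N}=\{1,\dots,n\}$, each node $v_i$ independently selects a set $\Gamma_{n,i}\subseteq \mathcal{N}\setminus\{i\}$ of $K_n$ distinct labels uniformly at random (the sets $\Gamma_{n,1},\dots,\Gamma_{n,n}$ are mutually independent). Distinct nodes $v_i,v_j$ are adjacent if $j\in\Gamma_{n,i}$ or $i\in\Gamma_{n,j}$ (undirected graph). The graph $\mathbb{H}(n;K_n,\gamma_n)$ is obtained by choosing a set $D\subset V$ of $\gamma_n$ nodes uniformly at random and deleting them: it has vertex set $R=V\setminus D$, and two distinct vertices of $R$ are adjacent iff they are adjacent in $\mathbb{H}(n;K_n)$. $\log$ is the natural logarithm; Landau notation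 $o,\Omega$ is as $n\to\infty$. *)

theory Defs
  imports "HOL-Library.FuncSet" "HOL-Library.Landau_Symbols" Complex_Main
begin

text \<open>Random K-out graph H(n;K) on labels {1..n}: node i selects a K-subset
  Gamma i of {1..n} - {i}.  Then a set D of gamma labels is deleted uniformly at
  random, independently.  The probability space is the uniform distribution on
  the finite set of all outcomes (Gamma, D).\<close>

definition kout_choices :: "nat \<Rightarrow> nat \<Rightarrow> (nat \<Rightarrow> nat set) set" where
  "kout_choices n K = Pi\<^sub>E {1..n} (\<lambda>i. {S. S \<subseteq> {1..n} - {i} \<and> card S = K})"

definition deletion_choices :: "nat \<Rightarrow> nat \<Rightarrow> nat set set" where
  "deletion_choices n g = {D. D \<subseteq> {1..n} \<and> card D = g}"

definition outcomes :: "nat \<Rightarrow> nat \<Rightarrow> nat \<Rightarrow> ((nat \<Rightarrow> nat set) \<times> nat set) set" where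
  "outcomes n K g = kout_choices n K \<times> deletion_choices n g"

definition kout_adj :: "(nat \<Rightarrow> nat set) \<Rightarrow> nat \<Rightarrow> nat \<Rightarrow> bool" where
  "kout_adj \<Gamma> i j \<longleftrightarrow> i \<noteq> j \<and> (j \<in> \<Gamma> i \<or> i \<in> \<Gamma> j)"

definition induced_edges :: "(nat \<Rightarrow> nat set) \<Rightarrow> nat set \<Rightarrow> (nat \<times> nat) set" where
  "induced_edges \<Gamma> R = {(i, j). i \<in> R \<and> j \<in> R \<and> kout_adj \<Gamma> i j}"

definition graph_connected :: "(nat \<Rightarrow> nat set) \<Rightarrow> nat set \<Rightarrow> bool" where
  "graph_connected \<Gamma> R \<longleftrightarrow> (\<forall>u\<in>R. \<forall>v\<in>R. (u, v) \<in> (induced_edges \<Gamma> R)\<^sup>*)"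

definition conn_prob :: "nat \<Rightarrow> nat \<Rightarrow> nat \<Rightarrow> real" where
  "conn_prob n K g =
     real (card {(\<Gamma>, D) \<in> outcomes n K g. graph_connected \<Gamma> ({1..n} - D)})
     / real (card (outcomes n K g))"

definition r2 :: "nat \<Rightarrow> real" where
  "r2 g = ln (real g) / (ln 2 + 1/2)"

end

theory Submission
  imports Defs "HOL-Real_Asymp.Real_Asymp"
begin

text \<open>
  If the graph induced on the \<open>m = n - \<gamma>\<close> surviving nodes is disconnected, some set \<open>S\<close> of
  \<open>s \<le> m / 2\<close> surviving nodes is separated from the other \<open>m - s\<close>: no node of either side
  selects a node of the other. Every node picks its \<open>K\<close> labels among \<open>N = n - 1\<close> candidates,
  so this has probability at most \<open>((N - (m - s)) / N) ^ (s K) * ((N - s) / N) ^ ((m - s) K)\<close>.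
  With \<open>C(m, s) \<le> (e m / s) ^ s\<close> and \<open>1 - x \<le> exp (- x)\<close>, a union bound over \<open>S\<close> and over
  the deleted set bounds the probability of disconnection by \<open>\<Sum>\<^sub>s y\<^sub>s ^ s\<close>, where
  \<open>y\<^sub>s = cut_base N m k s\<close> for any \<open>k \<le> K\<close>.

  For \<open>\<gamma> = o(\<surd>n)\<close> take \<open>k = 2\<close>: if \<open>s \<le> \<surd>n\<close> then \<open>y\<^sub>s = O((\<surd>n + \<gamma>\<^sup>2) / n)\<close> tends
  to 0, and if \<open>s > \<surd>n\<close> then \<open>y\<^sub>s\<close> is at most a quantity tending to \<open>(e / 2) exp (-1) = 1 / 2\<close>,
  so the tail is \<open>O((3/4) ^ \<surd>n)\<close>. For \<open>\<gamma> \<ge> c \<surd>n\<close> and \<open>K = r2 \<gamma> + \<omega>\<close> we eventually have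
  \<open>K \<ge> ln n / 3\<close>, and then \<open>y\<^sub>s \<le> 2 e n ^ (-1/12)\<close> for every \<open>s\<close>: for \<open>s \<le> \<gamma>\<close> because
  \<open>(s + \<gamma> - 1) / N \<le> exp (-4)\<close> (this is where \<open>\<gamma> = o(n)\<close> enters), for \<open>s > \<gamma>\<close> because the
  exponential factor is at most \<open>exp (- K / 4)\<close>.
\<close>

lemma power_div_fact_le_exp:
  fixes x :: real
  assumes "0 \<le> x"
  shows "x ^ n / fact n \<le> exp x"
proof -
  have "x ^ n / fact n \<le> (\<Sum>k<Suc n. x ^ k / fact k)"
    using assms by (intro member_le_sum) auto
  also have "\<dots> \<le> (\<Sum>k. x ^ k / fact k)"
    using assms summable_exp_generic[of x]
    by (intro sum_le_suminf) (auto simp: divide_inverse mult.commute)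
  also have "\<dots> = exp x"
    by (simp add: exp_def divide_inverse mult.commute)
  finally show ?thesis .
qed

lemma binomial_le_exp_power:
  assumes "1 \<le> s"
  shows "real (m choose s) \<le> (exp 1 * real m / real s) ^ s"
proof -
  have "real (m choose s) * fact s \<le> real m ^ s"
    by (metis binomial_fact_pow of_nat_fact of_nat_le_iff of_nat_mult of_nat_power)
  then have "real (m choose s) \<le> real m ^ s / fact s"
    by (simp add: field_simps)
  also have "\<dots> = (real m / real s) ^ s * (real s ^ s / fact s)"
    using assms by (simp add: field_simps power_divide)
  also have "\<dots> \<le> (real m / real s) ^ s * exp 1 ^ s"
    using power_div_fact_le_exp[of "real s" s] by (intro mult_left_mono) (auto simp: exp_of_nat_mult[symmetric])
  also have "\<dots> = (exp 1 * real m / real s) ^ s"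
    by (simp add: power_divide power_mult_distrib)
  finally show ?thesis .
qed

lemma of_nat_Suc_mult_binomial_Suc:
  "real (Suc k) * real (n choose Suc k) = (real n - real k) * real (n choose k)"
  using gbinomial_mult_1[of "real n" k] by (simp add: binomial_gbinomial algebra_simps)

lemma binomial_mult_power_le:
  assumes "c \<le> N"
  shows "real (c choose K) * real N ^ K \<le> real (N choose K) * real c ^ K"
proof (induction K)
  case 0
  then show ?case by simp
next
  case (Suc K)
  show ?case
  proof (cases "K \<le> c")
    case False
    then show ?thesis by (simp add: binomial_eq_0)
  next
    case True
    have "real (Suc K) * (real (c choose Suc K) * real N ^ Suc K)
        = (real (Suc K) * real (c choose Suc K)) * real N ^ Suc K"
      by (rule mult.assoc[symmetric])
    also have "\<dots> = ((real c - real K) * real N) * (real (c choose K) * real N ^ K)"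
      by (simp only: of_nat_Suc_mult_binomial_Suc power_Suc) (simp add: algebra_simps)
    also have "\<dots> \<le> ((real N - real K) * real c) * (real (N choose K) * real c ^ K)"
    proof (rule mult_mono)
      show "(real c - real K) * real N \<le> (real N - real K) * real c"
        using assms by (simp add: algebra_simps mult_left_mono)
    qed (use assms True Suc.IH in auto)
    also have "\<dots> = (real (Suc K) * real (N choose Suc K)) * real c ^ Suc K"
      by (simp only: of_nat_Suc_mult_binomial_Suc power_Suc) (simp add: algebra_simps)
    also have "\<dots> = real (Suc K) * (real (N choose Suc K) * real c ^ Suc K)"
      by (rule mult.assoc)
    finally show ?thesis
      by (rule mult_left_le_imp_le) simp
  qed
qed

lemma binomial_diff_le:
  assumes "0 < N" and "f \<le> N"
  shows "real ((N - f) choose K) \<le> real (N choose K) * ((real N - real f) / real N) ^ K"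
  using binomial_mult_power_le[of "N - f" N K] assms
  by (simp add: field_simps power_divide of_nat_diff)

lemma geometric_sum_le:
  fixes q :: real
  assumes "0 \<le> q" and "q < 1"
  shows "(\<Sum>s=L..M. q ^ s) \<le> q ^ L / (1 - q)"
proof -
  have "(\<Sum>s=L..M. q ^ s) = (if M < L then 0 else (q ^ L - q ^ Suc M) / (1 - q))"
    using assms by (simp add: sum_gp)
  also have "\<dots> \<le> q ^ L / (1 - q)"
    using assms by (auto simp: divide_right_mono)
  finally show ?thesis .
qed

lemma sum_power_split_le:
  fixes y :: "nat \<Rightarrow> real"
  assumes y0: "\<And>s. 1 \<le> s \<Longrightarrow> s \<le> M \<Longrightarrow> 0 \<le> y s"
    and yd: "\<And>s. 1 \<le> s \<Longrightarrow> s \<le> M \<Longrightarrow> s \<le> L \<Longrightarrow> y s \<le> d"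
    and yq: "\<And>s. 1 \<le> s \<Longrightarrow> s \<le> M \<Longrightarrow> L < s \<Longrightarrow> y s \<le> q"
    and d: "0 \<le> d" "d < 1" and q: "0 \<le> q" "q < 1"
  shows "(\<Sum>s=1..M. y s ^ s) \<le> d / (1 - d) + q ^ Suc L / (1 - q)"
proof -
  have "(\<Sum>s=1..M. y s ^ s) \<le> (\<Sum>s=1..M. d ^ s + (if L < s then q ^ s else 0))"
  proof (intro sum_mono)
    fix s assume s: "s \<in> {1..M}"
    show "y s ^ s \<le> d ^ s + (if L < s then q ^ s else 0)"
    proof (cases "s \<le> L")
      case True
      then have "y s ^ s \<le> d ^ s"
        using s y0 yd by (intro power_mono) auto
      then show ?thesis
        using True by simp
    next
      case False
      then have "y s ^ s \<le> q ^ s"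
        using s y0 yq by (intro power_mono) auto
      moreover have "0 \<le> d ^ s"
        using d by simp
      ultimately show ?thesis
        using False by simp
    qed
  qed
  also have "\<dots> = (\<Sum>s=1..M. d ^ s) + (\<Sum>s=Suc L..M. q ^ s)"
  proof -
    have "(\<Sum>s=1..M. (if L < s then q ^ s else 0)) = (\<Sum>s\<in>{s\<in>{1..M}. L < s}. q ^ s)"
      by (rule sum.inter_filter[symmetric]) simp
    also have "{s\<in>{1..M}. L < s} = {Suc L..M}"
      by auto
    finally show ?thesis
      by (simp add: sum.distrib)
  qed
  also have "\<dots> \<le> d ^ 1 / (1 - d) + q ^ Suc L / (1 - q)"
    using d q by (intro add_mono geometric_sum_le) auto
  finally show ?thesis
    by simp
qed

lemma power_Suc_nat_floor_le_powr:
  fixes q x :: real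
  assumes "0 < q" and "q \<le> 1" and "0 \<le> x"
  shows "q ^ Suc (nat \<lfloor>x\<rfloor>) \<le> q powr x"
proof -
  have "x \<le> real (Suc (nat \<lfloor>x\<rfloor>))"
    using assms(3) by linarith
  have "q ^ Suc (nat \<lfloor>x\<rfloor>) = q powr real (Suc (nat \<lfloor>x\<rfloor>))"
    using assms(1) by (intro powr_realpow[symmetric])
  also have "\<dots> \<le> q powr x"
    using assms(1,2) \<open>x \<le> real (Suc (nat \<lfloor>x\<rfloor>))\<close> by (intro powr_mono') auto
  finally show ?thesis .
qed

lemma sum_power_split_powr_le:
  fixes y :: "nat \<Rightarrow> real" and x d q :: real
  assumes "\<And>s. 1 \<le> s \<Longrightarrow> s \<le> M \<Longrightarrow> 0 \<le> y s"
    and "\<And>s. 1 \<le> s \<Longrightarrow> s \<le> M \<Longrightarrow> real s \<le> x \<Longrightarrow> y s \<le> d"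
    and "\<And>s. 1 \<le> s \<Longrightarrow> s \<le> M \<Longrightarrow> x < real s \<Longrightarrow> y s \<le> q"
    and "0 \<le> d" "d < 1" and "0 < q" "q < 1" and "0 \<le> x"
  shows "(\<Sum>s=1..M. y s ^ s) \<le> d / (1 - d) + q powr x / (1 - q)"
proof -
  have floor_iff: "real s \<le> x \<longleftrightarrow> s \<le> nat \<lfloor>x\<rfloor>" for s
    using \<open>0 \<le> x\<close> by (auto simp: le_nat_floor) linarith
  have "(\<Sum>s=1..M. y s ^ s) \<le> d / (1 - d) + q ^ Suc (nat \<lfloor>x\<rfloor>) / (1 - q)"
    using assms(1-7) floor_iff by (intro sum_power_split_le) (auto simp: not_le[symmetric])
  also have "q ^ Suc (nat \<lfloor>x\<rfloor>) / (1 - q) \<le> q powr x / (1 - q)"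
    using assms(6-8) by (intro divide_right_mono power_Suc_nat_floor_le_powr) auto
  finally show ?thesis
    by simp
qed

lemma card_filter_Times:
  assumes "finite A" and "finite B"
  shows "card {(a, b) \<in> A \<times> B. P a b} = (\<Sum>b\<in>B. card {a \<in> A. P a b})"
proof -
  have "{(a, b) \<in> A \<times> B. P a b} = prod.swap ` (SIGMA b:B. {a \<in> A. P a b})"
    by force
  then show ?thesis
    using assms by (simp add: card_image)
qed

lemma tendsto_one_if_deficit_le:
  fixes P B :: "nat \<Rightarrow> real"
  assumes "\<And>n. P n \<le> 1" and "eventually (\<lambda>n. 1 - P n \<le> B n) at_top" and "B \<longlonglongrightarrow> 0"
  shows "P \<longlonglongrightarrow> 1"
proof -
  have "(\<lambda>n. 1 - P n) \<longlonglongrightarrow> 0"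
    by (rule tendsto_sandwich[of "\<lambda>_. 0" _ _ B]) (use assms in auto)
  then have "(\<lambda>n. 1 - (1 - P n)) \<longlonglongrightarrow> 1 - 0"
    by (intro tendsto_diff) auto
  then show ?thesis
    by simp
qed

section \<open>Separated vertex sets\<close>

definition separated :: "(nat \<Rightarrow> nat set) \<Rightarrow> nat set \<Rightarrow> nat set \<Rightarrow> bool" where
  "separated \<Gamma> S T \<longleftrightarrow> (\<forall>i\<in>S. \<Gamma> i \<inter> T = {}) \<and> (\<forall>j\<in>T. \<Gamma> j \<inter> S = {})"

lemma separated_sym: "separated \<Gamma> S T \<longleftrightarrow> separated \<Gamma> T S"
  unfolding separated_def by blast

lemma separated_iff_not_adj:
  assumes "S \<inter> T = {}"
  shows "separated \<Gamma> S T \<longleftrightarrow> (\<forall>i\<in>S. \<forall>j\<in>T. \<not> kout_adj \<Gamma> i j)"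
  using assms unfolding separated_def kout_adj_def by (auto simp: disjoint_iff) metis+

lemma not_connected_imp_separated_half:
  assumes "finite R" and "\<not> graph_connected \<Gamma> R"
  obtains S where "S \<subseteq> R" "S \<noteq> {}" "2 * card S \<le> card R" "separated \<Gamma> S (R - S)"
proof -
  let ?E = "induced_edges \<Gamma> R"
  from assms(2) obtain u v where "u \<in> R" "v \<in> R" "(u, v) \<notin> ?E\<^sup>*"
    unfolding graph_connected_def by blast
  define C where "C = {w \<in> R. (u, w) \<in> ?E\<^sup>*}"
  have "u \<in> C" "v \<in> R - C" "C \<subseteq> R"
    using \<open>u \<in> R\<close> \<open>v \<in> R\<close> \<open>(u, v) \<notin> ?E\<^sup>*\<close> by (auto simp: C_def)
  have "\<not> kout_adj \<Gamma> i j" if "i \<in> C" "j \<in> R - C" for i j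
  proof
    assume "kout_adj \<Gamma> i j"
    then have "(i, j) \<in> ?E"
      using that \<open>C \<subseteq> R\<close> by (auto simp: induced_edges_def)
    with that show False
      by (auto simp: C_def intro: rtrancl_into_rtrancl)
  qed
  then have sep: "separated \<Gamma> C (R - C)"
    by (subst separated_iff_not_adj) auto
  have "card C + card (R - C) = card R"
    using \<open>C \<subseteq> R\<close> assms(1) by (metis card_Diff_subset card_mono finite_subset le_add_diff_inverse)
  show ?thesis
  proof (cases "2 * card C \<le> card R")
    case True
    with sep \<open>u \<in> C\<close> \<open>C \<subseteq> R\<close> show ?thesis
      using that by blast
  next
    case False
    have "R - (R - C) = C"
      using \<open>C \<subseteq> R\<close> by blast
    with sep have "separated \<Gamma> (R - C) (R - (R - C))"
      by (simp add: separated_sym)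
    with False \<open>card C + card (R - C) = card R\<close> \<open>v \<in> R - C\<close> show ?thesis
      using that[of "R - C"] by auto
  qed
qed

lemma finite_kout_choices: "finite (kout_choices n K)"
  unfolding kout_choices_def by (intro finite_PiE) auto

lemma card_kout_choices: "card (kout_choices n K) = (n - 1 choose K) ^ n"
proof -
  have "card (kout_choices n K) = (\<Prod>i\<in>{1..n}. card ({1..n} - {i}) choose K)"
    unfolding kout_choices_def by (simp add: card_PiE n_subsets)
  also have "\<dots> = (\<Prod>i\<in>{1..n}. n - 1 choose K)"
    by (intro prod.cong) auto
  finally show ?thesis
    by simp
qed

lemma separated_choices_eq_PiE:
  assumes "S \<subseteq> {1..n}" and "T \<subseteq> {1..n}" and "S \<inter> T = {}"
  defines "F \<equiv> \<lambda>i. if i \<in> S then T else if i \<in> T then S else {}"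
  shows "{\<Gamma> \<in> kout_choices n K. separated \<Gamma> S T}
      = Pi\<^sub>E {1..n} (\<lambda>i. {X. X \<subseteq> {1..n} - {i} - F i \<and> card X = K})"
    (is "_ = Pi\<^sub>E _ ?C")
proof (intro equalityI subsetI)
  fix \<Gamma> assume "\<Gamma> \<in> {\<Gamma> \<in> kout_choices n K. separated \<Gamma> S T}"
  then show "\<Gamma> \<in> Pi\<^sub>E {1..n} ?C"
    using assms(1-3) unfolding kout_choices_def separated_def F_def PiE_iff by auto
next
  fix \<Gamma> assume \<Gamma>: "\<Gamma> \<in> Pi\<^sub>E {1..n} ?C"
  then have disj: "\<Gamma> i \<inter> F i = {}" if "i \<in> {1..n}" for i
    using that unfolding PiE_iff by blast
  have "separated \<Gamma> S T"
    unfolding separated_def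
  proof (intro conjI ballI)
    fix i assume "i \<in> S"
    moreover have "i \<in> {1..n}"
      using \<open>i \<in> S\<close> assms(1) by blast
    ultimately show "\<Gamma> i \<inter> T = {}"
      using disj[of i] by (simp add: F_def)
  next
    fix j assume "j \<in> T"
    moreover have "j \<in> {1..n}" "j \<notin> S"
      using \<open>j \<in> T\<close> assms(2,3) by blast+
    ultimately show "\<Gamma> j \<inter> S = {}"
      using disj[of j] by (simp add: F_def)
  qed
  moreover have "\<Gamma> \<in> kout_choices n K"
    using \<Gamma> unfolding kout_choices_def PiE_iff by auto
  ultimately show "\<Gamma> \<in> {\<Gamma> \<in> kout_choices n K. separated \<Gamma> S T}"
    by simp
qed

lemma card_separated_choices:
  assumes "S \<subseteq> {1..n}" and "T \<subseteq> {1..n}" and "S \<inter> T = {}"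
  defines "F \<equiv> \<lambda>i. if i \<in> S then T else if i \<in> T then S else {}"
  shows "card {\<Gamma> \<in> kout_choices n K. separated \<Gamma> S T}
       = (\<Prod>i\<in>{1..n}. card ({1..n} - {i} - F i) choose K)"
  unfolding separated_choices_eq_PiE[OF assms(1-3)] F_def by (simp add: card_PiE n_subsets)

text \<open>For \<open>K = 1\<close> this is the probability that two fixed disjoint sets of sizes \<open>s\<close> and \<open>t\<close>
  are separated when every node picks one of \<open>N\<close> other nodes uniformly.\<close>

definition separation_factor :: "real \<Rightarrow> nat \<Rightarrow> nat \<Rightarrow> real" where
  "separation_factor N s t = ((N - real t) / N) ^ s * ((N - real s) / N) ^ t"

lemma card_separated_choices_le:
  assumes "S \<subseteq> {1..n}" and "T \<subseteq> {1..n}" and "S \<inter> T = {}" and "2 \<le> n"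
  shows "real (card {\<Gamma> \<in> kout_choices n K. separated \<Gamma> S T})
    \<le> real (card (kout_choices n K)) * separation_factor (real n - 1) (card S) (card T) ^ K"
proof -
  define N where "N = n - 1"
  define F where "F = (\<lambda>i. if i \<in> S then T else if i \<in> T then S else {})"
  have "0 < N"
    using assms(4) by (simp add: N_def)
  have card_F: "card ({1..n} - {i} - F i) = N - card (F i)" "card (F i) \<le> N"
    if "i \<in> {1..n}" for i
  proof -
    have "F i \<subseteq> {1..n} - {i}"
      using assms(1-3) that by (auto simp: F_def)
    moreover have "card ({1..n} - {i}) = N"
      using that by (simp add: N_def)
    ultimately show "card ({1..n} - {i} - F i) = N - card (F i)" "card (F i) \<le> N"
      by (metis card_Diff_subset finite_Diff finite_atLeastAtMost finite_subset,
          metis card_mono finite_Diff finite_atLeastAtMost)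
  qed
  have "real (card {\<Gamma> \<in> kout_choices n K. separated \<Gamma> S T})
      = (\<Prod>i\<in>{1..n}. real ((N - card (F i)) choose K))"
    using card_separated_choices[OF assms(1-3), of K] card_F(1) by (simp add: F_def)
  also have "\<dots> \<le> (\<Prod>i\<in>{1..n}. real (N choose K) * ((real N - real (card (F i))) / real N) ^ K)"
    using binomial_diff_le[OF \<open>0 < N\<close>] card_F(2) by (intro prod_mono) auto
  also have "\<dots> = real (N choose K) ^ n * (\<Prod>i\<in>{1..n}. (real N - real (card (F i))) / real N) ^ K"
    by (simp add: prod.distrib prod_power_distrib)
  also have "(\<Prod>i\<in>{1..n}. (real N - real (card (F i))) / real N)
      = separation_factor (real n - 1) (card S) (card T)"
  proof -
    have "(\<Prod>i\<in>{1..n}. (real N - real (card (F i))) / real N)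
        = (\<Prod>i\<in>{1..n}. if i \<in> S then (real N - real (card T)) / real N
                          else if i \<in> T then (real N - real (card S)) / real N else 1)"
      using \<open>0 < N\<close> by (intro prod.cong) (auto simp: F_def)
    moreover have "{1..n} \<inter> S = S" "{1..n} \<inter> - S \<inter> T = T"
      using assms(1-3) by auto
    ultimately show ?thesis
      using assms(4) by (simp add: prod.If_cases separation_factor_def N_def of_nat_diff)
  qed
  finally show ?thesis
    by (simp add: card_kout_choices N_def)
qed

section \<open>The union bound\<close>

lemma sum_half_subsets_by_card:
  fixes f :: "nat \<Rightarrow> real"
  assumes "finite R"
  shows "(\<Sum>S | S \<subseteq> R \<and> S \<noteq> {} \<and> 2 * card S \<le> card R. f (card S))
       = (\<Sum>s=1..card R div 2. real (card R choose s) * f s)"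
proof -
  define A where "A = (\<lambda>s. {S. S \<subseteq> R \<and> card S = s})"
  have half_subsets: "{S. S \<subseteq> R \<and> S \<noteq> {} \<and> 2 * card S \<le> card R} = (\<Union>s\<in>{1..card R div 2}. A s)"
    using assms by (auto simp: A_def card_gt_0_iff Suc_le_eq finite_subset)
  have "finite (A s)" for s
    using assms by (simp add: A_def)
  then have "(\<Sum>S | S \<subseteq> R \<and> S \<noteq> {} \<and> 2 * card S \<le> card R. f (card S))
      = (\<Sum>s=1..card R div 2. \<Sum>S\<in>A s. f (card S))"
    unfolding half_subsets by (intro sum.UNION_disjoint) (auto simp: A_def)
  also have "\<dots> = (\<Sum>s=1..card R div 2. real (card R choose s) * f s)"
    using assms by (intro sum.cong) (simp_all add: A_def n_subsets)
  finally show ?thesis .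
qed

lemma card_disconnected_choices_le:
  assumes "R \<subseteq> {1..n}" and "2 \<le> n"
  shows "real (card {\<Gamma> \<in> kout_choices n K. \<not> graph_connected \<Gamma> R})
    \<le> real (card (kout_choices n K)) *
      (\<Sum>s=1..card R div 2. real (card R choose s) * separation_factor (real n - 1) s (card R - s) ^ K)"
proof -
  define Sub where "Sub = {S. S \<subseteq> R \<and> S \<noteq> {} \<and> 2 * card S \<le> card R}"
  let ?sep = "\<lambda>S. {\<Gamma> \<in> kout_choices n K. separated \<Gamma> S (R - S)}"
  have "finite R"
    using assms(1) finite_subset by blast
  then have "finite Sub"
    by (simp add: Sub_def)
  have "{\<Gamma> \<in> kout_choices n K. \<not> graph_connected \<Gamma> R} \<subseteq> (\<Union>S\<in>Sub. ?sep S)"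
  proof
    fix \<Gamma> assume "\<Gamma> \<in> {\<Gamma> \<in> kout_choices n K. \<not> graph_connected \<Gamma> R}"
    moreover from this obtain S where "S \<subseteq> R" "S \<noteq> {}" "2 * card S \<le> card R" "separated \<Gamma> S (R - S)"
      using not_connected_imp_separated_half[OF \<open>finite R\<close>] by blast
    ultimately show "\<Gamma> \<in> (\<Union>S\<in>Sub. ?sep S)"
      by (auto simp: Sub_def)
  qed
  then have "card {\<Gamma> \<in> kout_choices n K. \<not> graph_connected \<Gamma> R} \<le> card (\<Union>S\<in>Sub. ?sep S)"
    using \<open>finite Sub\<close> finite_kout_choices by (intro card_mono) auto
  also have "\<dots> \<le> (\<Sum>S\<in>Sub. card (?sep S))"
    by (rule card_UN_le[OF \<open>finite Sub\<close>])
  finally have "real (card {\<Gamma> \<in> kout_choices n K. \<not> graph_connected \<Gamma> R})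
      \<le> (\<Sum>S\<in>Sub. real (card (?sep S)))"
    by (simp flip: of_nat_sum)
  also have "\<dots> \<le> (\<Sum>S\<in>Sub. real (card (kout_choices n K)) *
                      separation_factor (real n - 1) (card S) (card R - card S) ^ K)"
  proof (intro sum_mono)
    fix S assume "S \<in> Sub"
    then have "S \<subseteq> R"
      by (simp add: Sub_def)
    then have "card (R - S) = card R - card S"
      using \<open>finite R\<close> by (simp add: card_Diff_subset finite_subset)
    then show "real (card (?sep S)) \<le> real (card (kout_choices n K)) *
                  separation_factor (real n - 1) (card S) (card R - card S) ^ K"
      using card_separated_choices_le[of S n "R - S" K] \<open>S \<subseteq> R\<close> assms by auto
  qed
  also have "\<dots> = real (card (kout_choices n K)) *
      (\<Sum>s=1..card R div 2. real (card R choose s) * separation_factor (real n - 1) s (card R - s) ^ K)"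
    using sum_half_subsets_by_card[OF \<open>finite R\<close>, of "\<lambda>s. separation_factor (real n - 1) s (card R - s) ^ K"]
    by (simp add: Sub_def flip: sum_distrib_left)
  finally show ?thesis .
qed

lemma conn_prob_le_one: "conn_prob n K g \<le> 1"
proof -
  have "finite (outcomes n K g)"
    by (simp add: outcomes_def deletion_choices_def finite_kout_choices)
  then have "card {(\<Gamma>, D) \<in> outcomes n K g. graph_connected \<Gamma> ({1..n} - D)} \<le> card (outcomes n K g)"
    by (intro card_mono) auto
  then show ?thesis
    by (cases "card (outcomes n K g) = 0") (auto simp: conn_prob_def divide_le_eq_1)
qed

lemma one_minus_conn_prob_le:
  assumes "K \<le> n - 1" and "g \<le> n"
    and "\<And>D. D \<in> deletion_choices n g \<Longrightarrow>
      real (card {\<Gamma> \<in> kout_choices n K. \<not> graph_connected \<Gamma> ({1..n} - D)})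
        \<le> real (card (kout_choices n K)) * F"
  shows "1 - conn_prob n K g \<le> F"
proof -
  let ?kc = "kout_choices n K" and ?dc = "deletion_choices n g"
  let ?good = "\<lambda>D. {\<Gamma> \<in> ?kc. graph_connected \<Gamma> ({1..n} - D)}"
  let ?bad = "\<lambda>D. {\<Gamma> \<in> ?kc. \<not> graph_connected \<Gamma> ({1..n} - D)}"
  have "finite ?dc"
    by (simp add: deletion_choices_def)
  have "0 < card ?kc"
    using assms(1) by (simp add: card_kout_choices)
  have "0 < card ?dc"
    using assms(2) by (simp add: deletion_choices_def n_subsets)
  have "?bad D = ?kc - ?good D" for D
    by auto
  then have good_bad: "real (card (?good D)) = real (card ?kc) - real (card (?bad D))" for D
    using finite_kout_choices by (simp add: card_Diff_subset card_mono of_nat_diff)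
  have "conn_prob n K g = (\<Sum>D\<in>?dc. real (card (?good D))) / (real (card ?kc) * real (card ?dc))"
    unfolding conn_prob_def outcomes_def card_filter_Times[OF finite_kout_choices \<open>finite ?dc\<close>]
    by (simp add: card_cartesian_product)
  also have "(\<Sum>D\<in>?dc. real (card (?good D)))
      = real (card ?kc) * real (card ?dc) - (\<Sum>D\<in>?dc. real (card (?bad D)))"
    by (simp only: good_bad sum_subtractf) simp
  finally have "1 - conn_prob n K g
      = (\<Sum>D\<in>?dc. real (card (?bad D))) / (real (card ?kc) * real (card ?dc))"
    using \<open>0 < card ?kc\<close> \<open>0 < card ?dc\<close> by (simp add: field_simps)
  also have "\<dots> \<le> (\<Sum>D\<in>?dc. real (card ?kc) * F) / (real (card ?kc) * real (card ?dc))"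
    using assms(3) by (intro divide_right_mono sum_mono) auto
  also have "\<dots> = F"
    using \<open>0 < card ?kc\<close> \<open>0 < card ?dc\<close> by simp
  finally show ?thesis .
qed

lemma one_minus_conn_prob_le_sum:
  assumes "2 \<le> n" and "K \<le> n - 1" and "g \<le> n"
  shows "1 - conn_prob n K g
    \<le> (\<Sum>s=1..(n - g) div 2. real ((n - g) choose s) * separation_factor (real n - 1) s (n - g - s) ^ K)"
proof (rule one_minus_conn_prob_le[OF assms(2,3)])
  fix D assume "D \<in> deletion_choices n g"
  then have "D \<subseteq> {1..n}" "card ({1..n} - D) = n - g"
    by (auto simp: deletion_choices_def card_Diff_subset finite_subset)
  then show "real (card {\<Gamma> \<in> kout_choices n K. \<not> graph_connected \<Gamma> ({1..n} - D)})
      \<le> real (card (kout_choices n K)) *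
        (\<Sum>s=1..(n - g) div 2. real ((n - g) choose s) * separation_factor (real n - 1) s (n - g - s) ^ K)"
    using card_disconnected_choices_le[of "{1..n} - D" n K] assms(1) by auto
qed

text \<open>The factor \<open>e m / s\<close> comes from \<open>C(m, s) \<le> (e m / s) ^ s\<close>, the exponential from
  \<open>(1 - s / N) ^ ((m - s) k) \<le> exp (- s k (m - s) / N)\<close>.\<close>

definition cut_base :: "real \<Rightarrow> real \<Rightarrow> nat \<Rightarrow> real \<Rightarrow> real" where
  "cut_base N m k s = exp 1 * m / s * ((N - (m - s)) / N) ^ k * exp (- (real k * (m - s) / N))"

lemma cut_base_nonneg:
  assumes "0 < N" and "0 \<le> m" and "0 < s" and "m - s \<le> N"
  shows "0 \<le> cut_base N m k s"
  using assms by (simp add: cut_base_def)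

lemma binomial_separation_factor_le_cut_base:
  assumes "1 \<le> s" and "s \<le> m" and "real s \<le> N" and "real (m - s) \<le> N" and "k \<le> K"
  shows "real (m choose s) * separation_factor N s (m - s) ^ K \<le> cut_base N (real m) k (real s) ^ s"
proof -
  define t where "t = m - s"
  define a where "a = (N - real t) / N"
  define b where "b = (N - real s) / N"
  have "0 < N"
    using assms(1,3) by linarith
  have a: "0 \<le> a" "a \<le> 1" and b: "0 \<le> b" "b \<le> 1"
    using assms(3,4) \<open>0 < N\<close> by (auto simp: a_def b_def t_def)
  have b_le_exp: "b \<le> exp (- (real s / N))"
    using exp_ge_add_one_self[of "- (real s / N)"] \<open>0 < N\<close> by (simp add: b_def diff_divide_distrib)
  have sf: "separation_factor N s t = a ^ s * b ^ t"
    by (simp add: separation_factor_def a_def b_def)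
  have "0 \<le> separation_factor N s t" "separation_factor N s t \<le> 1"
    using a b by (simp_all add: sf mult_le_one power_le_one)
  then have "separation_factor N s t ^ K \<le> separation_factor N s t ^ k"
    by (rule power_decreasing[OF assms(5)])
  also have "\<dots> = (a ^ k) ^ s * (b ^ t) ^ k"
    by (simp add: sf power_mult_distrib power_mult[symmetric] mult.commute)
  also have "\<dots> \<le> (a ^ k) ^ s * (exp (- (real s / N)) ^ t) ^ k"
    using a b b_le_exp by (intro mult_left_mono power_mono) auto
  also have "(exp (- (real s / N)) ^ t) ^ k = exp (- (real k * real t / N)) ^ s"
    by (simp only: exp_of_nat_mult[symmetric] power_mult[symmetric]) (simp add: algebra_simps)
  also have "(a ^ k) ^ s * exp (- (real k * real t / N)) ^ s = (a ^ k * exp (- (real k * real t / N))) ^ s"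
    by (simp add: power_mult_distrib)
  finally have "separation_factor N s t ^ K \<le> (a ^ k * exp (- (real k * real t / N))) ^ s" .
  then have "real (m choose s) * separation_factor N s t ^ K
      \<le> (exp 1 * real m / real s) ^ s * (a ^ k * exp (- (real k * real t / N))) ^ s"
    using \<open>0 \<le> separation_factor N s t\<close> by (intro mult_mono binomial_le_exp_power assms(1)) auto
  also have "\<dots> = cut_base N (real m) k (real s) ^ s"
    using assms(2)
    by (simp add: cut_base_def a_def t_def of_nat_diff power_mult_distrib[symmetric] mult.assoc)
  finally show ?thesis
    by (simp add: t_def)
qed

lemma one_minus_conn_prob_le_cut_sum:
  assumes "2 \<le> n" and "K \<le> n - 1" and "g \<le> n" and "k \<le> K"
  shows "1 - conn_prob n K g
    \<le> (\<Sum>s=1..(n - g) div 2. cut_base (real n - 1) (real n - real g) k (real s) ^ s)"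
proof -
  have "1 - conn_prob n K g
      \<le> (\<Sum>s=1..(n - g) div 2. real ((n - g) choose s) * separation_factor (real n - 1) s (n - g - s) ^ K)"
    by (rule one_minus_conn_prob_le_sum[OF assms(1-3)])
  also have "\<dots> \<le> (\<Sum>s=1..(n - g) div 2. cut_base (real n - 1) (real (n - g)) k (real s) ^ s)"
    by (intro sum_mono binomial_separation_factor_le_cut_base) (use assms in auto)
  finally show ?thesis
    using assms(3) by (simp add: of_nat_diff)
qed

section \<open>Few deleted nodes\<close>

definition small_cut_bound :: "real \<Rightarrow> real \<Rightarrow> real" where
  "small_cut_bound n g = 2 * exp 1 * n * (sqrt n + g ^ 2) / (n - 1) ^ 2"

definition large_cut_bound :: "real \<Rightarrow> real \<Rightarrow> real" where
  "large_cut_bound n g =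
     exp 1 / 2 * ((n - g) / (n - 1)) ^ 2 * (1 + g / sqrt n) ^ 2 * exp (- ((n - g) / (n - 1)))"

lemma cut_base_two_le_small_cut_bound:
  fixes n g s :: real
  assumes "1 < n" and "0 \<le> g" and "1 \<le> s" and "s \<le> sqrt n" and "s \<le> n - g"
  shows "cut_base (n - 1) (n - g) 2 s \<le> small_cut_bound n g"
proof -
  define N where "N = n - 1"
  define m where "m = n - g"
  have "0 < N" "0 \<le> m" "m \<le> n" "s \<le> m"
    using assms by (auto simp: N_def m_def)
  have eq: "N - (m - s) = s + g - 1"
    by (simp add: N_def m_def)
  have "cut_base N m 2 s \<le> exp 1 * m / s * ((N - (m - s)) / N) ^ 2"
    unfolding cut_base_def
    by (rule mult_right_le_one_le) (use \<open>s \<le> m\<close> \<open>0 < N\<close> \<open>0 \<le> m\<close> assms(3) in auto)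
  also have "\<dots> = exp 1 * (m * (s + g - 1) ^ 2) / (s * N ^ 2)"
    unfolding eq by (simp add: power_divide)
  also have "\<dots> \<le> exp 1 * (2 * n * (sqrt n + g ^ 2) * s) / (s * N ^ 2)"
  proof (intro divide_right_mono mult_left_mono)
    have "(s + g - 1) ^ 2 \<le> (s + g) ^ 2"
      using assms(2,3) by (intro power_mono) auto
    also have "\<dots> \<le> 2 * s ^ 2 + 2 * g ^ 2"
      using sum_squares_ge_zero[of "s - g" 0] by (simp add: power2_eq_square algebra_simps)
    finally have "(s + g - 1) ^ 2 \<le> 2 * s ^ 2 + 2 * g ^ 2" .
    moreover have "s ^ 2 \<le> sqrt n * s" "g ^ 2 \<le> g ^ 2 * s"
      using assms(3,4) by (simp_all add: power2_eq_square mult_right_mono mult_le_cancel_left1)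
    ultimately have "m * (s + g - 1) ^ 2 \<le> n * (2 * (sqrt n + g ^ 2) * s)"
      using \<open>0 \<le> m\<close> \<open>m \<le> n\<close> \<open>1 < n\<close>
      by (intro mult_mono) (auto simp: algebra_simps)
    then show "m * (s + g - 1) ^ 2 \<le> 2 * n * (sqrt n + g ^ 2) * s"
      by (simp add: algebra_simps)
  qed (use assms(3) \<open>0 < N\<close> in auto)
  also have "\<dots> = small_cut_bound n g"
    using assms(3) \<open>0 < N\<close> by (simp add: small_cut_bound_def N_def field_simps)
  finally show ?thesis
    by (simp add: N_def m_def)
qed

lemma cut_base_two_le_large_cut_bound:
  fixes n g s :: real
  assumes "1 < n" and "0 \<le> g" and "sqrt n < s" and "2 * s \<le> n - g"
  shows "cut_base (n - 1) (n - g) 2 s \<le> large_cut_bound n g"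
proof -
  define N where "N = n - 1"
  define m where "m = n - g"
  define c where "c = 1 + g / sqrt n"
  define \<alpha> where "\<alpha> = s / N"
  have "0 < N" "0 < sqrt n" "1 \<le> sqrt n"
    using assms(1) by (auto simp: N_def)
  have "1 \<le> s"
    using assms(3) \<open>1 \<le> sqrt n\<close> by linarith
  then have "0 \<le> m"
    using assms(4) by (simp add: m_def)
  have eq: "N - (m - s) = s + g - 1"
    by (simp add: N_def m_def)
  have "0 \<le> \<alpha>" "\<alpha> \<le> m / (2 * N)"
    using assms(4) \<open>1 \<le> s\<close> \<open>0 < N\<close> by (simp_all add: \<alpha>_def m_def field_simps)
  have "1 \<le> s / sqrt n"
    using assms(3) \<open>0 < sqrt n\<close> by simp
  then have "g \<le> g * (s / sqrt n)"
    using mult_left_mono[OF _ assms(2)] by fastforce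
  then have "s + g - 1 \<le> s * c"
    by (simp add: c_def algebra_simps)
  then have "(s + g - 1) / N \<le> \<alpha> * c"
    using \<open>0 < N\<close> by (simp add: \<alpha>_def divide_right_mono)
  then have "((s + g - 1) / N) ^ 2 \<le> (\<alpha> * c) ^ 2"
    using assms(2) \<open>1 \<le> s\<close> \<open>0 < N\<close> by (intro power_mono) auto
  then have sq: "((s + g - 1) / N) ^ 2 \<le> \<alpha> ^ 2 * c ^ 2"
    by (simp add: power_mult_distrib)
  have exp_eq: "exp (- (2 * (m - s) / N)) = exp (- (2 * m / N)) * exp (2 * \<alpha>)"
    by (simp add: \<alpha>_def exp_add[symmetric] diff_divide_distrib algebra_simps)
  have "\<alpha> * exp (2 * \<alpha>) \<le> m / (2 * N) * exp (m / N)"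
    using \<open>0 \<le> \<alpha>\<close> \<open>\<alpha> \<le> m / (2 * N)\<close> \<open>0 < N\<close> \<open>0 \<le> m\<close>
    by (intro mult_mono) (auto simp: field_simps)
  have "cut_base N m 2 s = exp 1 * m / s * ((s + g - 1) / N) ^ 2 * exp (- (2 * (m - s) / N))"
    by (simp add: cut_base_def eq)
  also have "\<dots> \<le> exp 1 * m / s * (\<alpha> ^ 2 * c ^ 2) * exp (- (2 * (m - s) / N))"
    using sq \<open>0 \<le> m\<close> \<open>1 \<le> s\<close> by (intro mult_right_mono mult_left_mono) auto
  also have "\<dots> = exp 1 * (m / N) * c ^ 2 * exp (- (2 * m / N)) * (\<alpha> * exp (2 * \<alpha>))"
    unfolding exp_eq using \<open>1 \<le> s\<close> \<open>0 < N\<close> by (simp add: \<alpha>_def field_simps power2_eq_square)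
  also have "\<dots> \<le> exp 1 * (m / N) * c ^ 2 * exp (- (2 * m / N)) * (m / (2 * N) * exp (m / N))"
    using \<open>\<alpha> * exp (2 * \<alpha>) \<le> m / (2 * N) * exp (m / N)\<close> \<open>0 \<le> m\<close> \<open>0 < N\<close>
    by (intro mult_left_mono) auto
  also have "\<dots> = exp 1 / 2 * (m / N) ^ 2 * c ^ 2 * exp (- (m / N))"
    by (simp add: power2_eq_square field_simps flip: exp_add)
  finally show ?thesis
    by (simp add: large_cut_bound_def N_def m_def c_def)
qed

lemma one_minus_conn_prob_le_small_deletion:
  fixes n K g :: nat
  assumes "2 \<le> n" and "K \<le> n - 1" and "2 \<le> K" and "g \<le> n"
    and "small_cut_bound n g < 1" and "large_cut_bound n g \<le> 3 / 4"
  shows "1 - conn_prob n K g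
    \<le> small_cut_bound n g / (1 - small_cut_bound n g) + 4 * (3 / 4) powr sqrt n"
proof -
  let ?y = "\<lambda>s. cut_base (real n - 1) (real n - real g) 2 (real s)"
  have "1 - conn_prob n K g \<le> (\<Sum>s=1..(n - g) div 2. ?y s ^ s)"
    by (rule one_minus_conn_prob_le_cut_sum) (use assms in auto)
  also have "\<dots> \<le> small_cut_bound n g / (1 - small_cut_bound n g) + (3 / 4) powr sqrt n / (1 - 3 / 4)"
  proof (rule sum_power_split_powr_le)
    fix s assume s: "1 \<le> s" "s \<le> (n - g) div 2"
    then have "2 * s \<le> n - g"
      by auto
    then have "2 * real s \<le> real n - real g"
      using assms(4) by (simp flip: of_nat_le_iff of_nat_diff of_nat_mult)
    show "0 \<le> ?y s"
      using \<open>2 * real s \<le> real n - real g\<close> s assms(1) by (intro cut_base_nonneg) auto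
    show "?y s \<le> small_cut_bound n g" if "real s \<le> sqrt n"
      using \<open>2 * real s \<le> real n - real g\<close> s assms(1) that
      by (intro cut_base_two_le_small_cut_bound) auto
    show "?y s \<le> 3 / 4" if "sqrt n < real s"
      using cut_base_two_le_large_cut_bound[of n g s] \<open>2 * real s \<le> real n - real g\<close> assms(1,6) that
      by auto
  qed (use assms(1,5) in \<open>auto simp: small_cut_bound_def\<close>)
  finally show ?thesis
    by simp
qed

lemma small_cut_bound_tendsto_zero:
  fixes g :: "nat \<Rightarrow> real"
  assumes "(\<lambda>n. g n / sqrt (real n)) \<longlonglongrightarrow> 0"
  shows "(\<lambda>n. small_cut_bound (real n) (g n)) \<longlonglongrightarrow> 0"
proof -
  have "(\<lambda>n. 2 * exp 1 * (real n * sqrt (real n) / (real n - 1) ^ 2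
          + (real n / (real n - 1)) ^ 2 * (g n / sqrt (real n)) ^ 2)) \<longlonglongrightarrow> 2 * exp 1 * (0 + 1 ^ 2 * 0 ^ 2)"
  proof (intro tendsto_intros assms)
    show "(\<lambda>n. real n * sqrt (real n) / (real n - 1) ^ 2) \<longlonglongrightarrow> 0"
      by real_asymp
    show "(\<lambda>n. real n / (real n - 1)) \<longlonglongrightarrow> 1"
      by real_asymp
  qed
  moreover have "eventually (\<lambda>n. 2 * exp 1 * (real n * sqrt (real n) / (real n - 1) ^ 2
          + (real n / (real n - 1)) ^ 2 * (g n / sqrt (real n)) ^ 2) = small_cut_bound (real n) (g n)) at_top"
    using eventually_ge_at_top[of 2]
  proof eventually_elim
    case (elim n)
    then have "real n - 1 \<noteq> 0" "real n > 0"
      by auto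
    then show ?case
      by (simp add: small_cut_bound_def power_divide field_simps) (simp add: power2_eq_square)
  qed
  ultimately show ?thesis
    by (simp add: tendsto_cong)
qed

lemma large_cut_bound_tendsto_half:
  fixes g :: "nat \<Rightarrow> real"
  assumes "(\<lambda>n. g n / sqrt (real n)) \<longlonglongrightarrow> 0"
  shows "(\<lambda>n. large_cut_bound (real n) (g n)) \<longlonglongrightarrow> 1 / 2"
proof -
  have "(\<lambda>n. real n / (real n - 1) - g n / sqrt (real n) * (sqrt (real n) / (real n - 1))) \<longlonglongrightarrow> 1 - 0 * 0"
  proof (intro tendsto_intros assms)
    show "(\<lambda>n. real n / (real n - 1)) \<longlonglongrightarrow> 1"
      by real_asymp
    show "(\<lambda>n. sqrt (real n) / (real n - 1)) \<longlonglongrightarrow> 0"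
      by real_asymp
  qed
  moreover have "eventually (\<lambda>n. real n / (real n - 1) - g n / sqrt (real n) * (sqrt (real n) / (real n - 1))
      = (real n - g n) / (real n - 1)) at_top"
    using eventually_ge_at_top[of 1] by eventually_elim (simp add: diff_divide_distrib)
  ultimately have ratio: "(\<lambda>n. (real n - g n) / (real n - 1)) \<longlonglongrightarrow> 1"
    by (simp add: tendsto_cong)
  have "(\<lambda>n. large_cut_bound (real n) (g n)) \<longlonglongrightarrow> exp 1 / 2 * 1 ^ 2 * (1 + 0) ^ 2 * exp (- 1)"
    unfolding large_cut_bound_def by (intro tendsto_intros ratio assms)
  also have "exp 1 / 2 * 1 ^ 2 * (1 + 0) ^ 2 * exp (- 1) = (1 / 2 :: real)"
    by (simp add: exp_minus field_simps)
  finally show ?thesis .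
qed

lemma conn_prob_tendsto_one_if_few_deleted:
  fixes K \<gamma> :: "nat \<Rightarrow> nat"
  assumes "eventually (\<lambda>n. K n < n) at_top" and "(\<lambda>n. real (\<gamma> n)) \<in> o(\<lambda>n. sqrt (real n))"
    and "\<And>n. 2 \<le> K n"
  shows "(\<lambda>n. conn_prob n (K n) (\<gamma> n)) \<longlonglongrightarrow> 1"
proof -
  define d where "d n = small_cut_bound (real n) (real (\<gamma> n))" for n
  have g: "(\<lambda>n. real (\<gamma> n) / sqrt (real n)) \<longlonglongrightarrow> 0"
    using smalloD_tendsto[OF assms(2)] by simp
  have d: "d \<longlonglongrightarrow> 0"
    unfolding d_def by (rule small_cut_bound_tendsto_zero[OF g])
  have "eventually (\<lambda>n. real (\<gamma> n) \<le> sqrt (real n)) at_top"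
    using landau_o.smallD[OF assms(2), of 1] by simp
  moreover have "eventually (\<lambda>n. sqrt (real n) \<le> real n) at_top"
    by real_asymp
  ultimately have "eventually (\<lambda>n. \<gamma> n \<le> n) at_top"
    by eventually_elim simp
  show ?thesis
  proof (rule tendsto_one_if_deficit_le)
    have "(\<lambda>n. (3 / 4 :: real) powr sqrt (real n)) \<longlonglongrightarrow> 0"
      by real_asymp
    then show "(\<lambda>n. d n / (1 - d n) + 4 * (3 / 4) powr sqrt (real n)) \<longlonglongrightarrow> 0"
      using tendsto_add[OF tendsto_divide[OF d tendsto_diff[OF tendsto_const d]] tendsto_mult_right_zero]
      by simp
    have "eventually (\<lambda>n. d n < 1) at_top"
      by (rule order_tendstoD(2)[OF d]) simp
    moreover have "eventually (\<lambda>n. large_cut_bound (real n) (real (\<gamma> n)) < 3 / 4) at_top"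
      by (rule order_tendstoD(2)[OF large_cut_bound_tendsto_half[OF g]]) simp
    ultimately show "eventually (\<lambda>n. 1 - conn_prob n (K n) (\<gamma> n)
        \<le> d n / (1 - d n) + 4 * (3 / 4) powr sqrt (real n)) at_top"
      using eventually_ge_at_top[of 2] assms(1) \<open>eventually (\<lambda>n. \<gamma> n \<le> n) at_top\<close>
      unfolding d_def
      by eventually_elim (rule one_minus_conn_prob_le_small_deletion; use assms(3) in auto)
  qed (rule conn_prob_le_one)
qed

section \<open>Many deleted nodes\<close>

lemma cut_base_le_of_le_deleted:
  fixes n g s :: real
  assumes "1 < n" and "1 \<le> s" and "s \<le> g" and "s \<le> n - g"
    and "2 * g \<le> exp (- 4) * (n - 1)" and "ln n / 3 \<le> real K"
  shows "cut_base (n - 1) (n - g) K s \<le> 2 * exp 1 * exp (- (ln n / 12))"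
proof -
  define N where "N = n - 1"
  define m where "m = n - g"
  define a where "a = (s + g - 1) / N"
  have "0 < N" "0 \<le> m" "m \<le> n"
    using assms(1-4) by (auto simp: N_def m_def)
  have "0 \<le> a" "a \<le> exp (- 4)"
    using assms(2,3,5) \<open>0 < N\<close> by (auto simp: a_def N_def field_simps)
  then have "a ^ K \<le> exp (- 4) ^ K"
    by (rule power_mono[rotated])
  also have "\<dots> = exp (- (4 * real K))"
    by (simp flip: exp_of_nat_mult)
  also have "\<dots> \<le> exp (- (4 * ln n / 3))"
    using assms(6) by simp
  finally have aK: "a ^ K \<le> exp (- (4 * ln n / 3))" .
  have "m \<le> m * s"
    using mult_left_mono[OF assms(2) \<open>0 \<le> m\<close>] by simp
  then have "m / s \<le> m"
    using assms(2) by (simp add: divide_le_eq)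
  then have "m / s \<le> n"
    using \<open>m \<le> n\<close> by linarith
  have "cut_base N m K s = exp 1 * m / s * a ^ K * exp (- (real K * (m - s) / N))"
    by (simp add: cut_base_def a_def N_def m_def add.commute)
  also have "\<dots> \<le> exp 1 * m / s * a ^ K"
    by (rule mult_right_le_one_le) (use assms(2,4) \<open>0 < N\<close> \<open>0 \<le> m\<close> \<open>0 \<le> a\<close> in \<open>auto simp: m_def\<close>)
  also have "\<dots> = exp 1 * (m / s * a ^ K)"
    by simp
  also have "\<dots> \<le> exp 1 * (n * exp (- (4 * ln n / 3)))"
    using \<open>m / s \<le> n\<close> aK \<open>0 \<le> a\<close> \<open>0 \<le> m\<close> assms(1,2)
    by (intro mult_left_mono mult_mono) auto
  also have "n * exp (- (4 * ln n / 3)) = exp (ln n) * exp (- (4 * ln n / 3))"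
    using assms(1) by simp
  also have "\<dots> = exp (- (ln n / 3))"
    by (simp flip: exp_add)
  also have "exp 1 * exp (- (ln n / 3)) \<le> 2 * exp 1 * exp (- (ln n / 12))"
  proof -
    have "exp (- (ln n / 3)) \<le> exp (- (ln n / 12))"
      using assms(1) by simp
    then have "exp (- (ln n / 3)) \<le> 2 * exp (- (ln n / 12))"
      using exp_gt_zero[of "- (ln n / 12)"] by linarith
    then show ?thesis
      by simp
  qed
  finally show ?thesis
    by (simp add: N_def m_def)
qed

lemma cut_base_le_of_deleted_less:
  fixes n g s :: real
  assumes "1 < n" and "1 \<le> g" and "g < s" and "2 * s \<le> n - g"
    and "n - 1 \<le> 2 * (n - g)" and "ln n / 3 \<le> real K"
  shows "cut_base (n - 1) (n - g) K s \<le> 2 * exp 1 * exp (- (ln n / 12))"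
proof -
  define N where "N = n - 1"
  define m where "m = n - g"
  define a where "a = (s + g - 1) / N"
  have "0 < N" "0 < s" "m \<le> N"
    using assms(1-3) by (auto simp: N_def m_def)
  have "0 < real K"
    using assms(1,6) ln_gt_zero[of n] by linarith
  have "0 \<le> a" "a \<le> 2 * s / N"
    using assms(2,3) \<open>0 < N\<close> by (auto simp: a_def divide_right_mono)
  moreover have "2 * s / N \<le> 1"
    using assms(4) \<open>m \<le> N\<close> \<open>0 < N\<close> by (simp add: m_def)
  ultimately have "a ^ K \<le> a"
    using \<open>0 < real K\<close> by (intro power_decreasing[of 1, simplified]) auto
  have "m / s * a ^ K \<le> m / s * (2 * s / N)"
    using \<open>a ^ K \<le> a\<close> \<open>a \<le> 2 * s / N\<close> assms(4) \<open>0 < s\<close> by (intro mult_left_mono) (auto simp: m_def)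
  also have "\<dots> = 2 * (m / N)"
    using \<open>0 < s\<close> by simp
  also have "\<dots> \<le> 2"
    using \<open>m \<le> N\<close> \<open>0 < N\<close> by (simp add: divide_le_eq)
  finally have "m / s * a ^ K \<le> 2" .
  have "1 / 4 \<le> (m - s) / N"
    using assms(4,5) \<open>0 < N\<close> by (simp add: m_def N_def field_simps)
  then have "real K * (1 / 4) \<le> real K * ((m - s) / N)"
    by (intro mult_left_mono) auto
  then have "ln n / 12 \<le> real K * ((m - s) / N)"
    using assms(6) by linarith
  then have "exp (- (real K * (m - s) / N)) \<le> exp (- (ln n / 12))"
    by simp
  have "cut_base N m K s = exp 1 * (m / s * a ^ K) * exp (- (real K * (m - s) / N))"
    by (simp add: cut_base_def a_def N_def m_def add.commute)
  also have "\<dots> \<le> exp 1 * 2 * exp (- (ln n / 12))"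
    using \<open>m / s * a ^ K \<le> 2\<close> \<open>exp (- (real K * (m - s) / N)) \<le> exp (- (ln n / 12))\<close>
      \<open>0 \<le> a\<close> \<open>0 < s\<close> assms(4)
    by (intro mult_mono mult_left_mono) (auto simp: m_def)
  finally show ?thesis
    by (simp add: N_def m_def)
qed

lemma cut_base_le_decay:
  fixes n g s :: real
  assumes "2 \<le> n" and "1 \<le> g" and "4 * g \<le> exp (- 4) * n" and "1 \<le> s" and "2 * s \<le> n - g"
    and "ln n / 3 \<le> real K"
  shows "cut_base (n - 1) (n - g) K s \<le> 2 * exp 1 * exp (- (ln n / 12))"
proof (cases "s \<le> g")
  case True
  have "exp (- 4) * 2 \<le> exp (- 4) * n"
    using assms(1) by (intro mult_left_mono) auto
  moreover have "exp (- 4) * (n - 1) = exp (- 4) * n - exp (- 4)"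
    by (simp add: algebra_simps)
  ultimately have "2 * g \<le> exp (- 4) * (n - 1)"
    using assms(3) by linarith
  with True show ?thesis
    using assms by (intro cut_base_le_of_le_deleted) auto
next
  case False
  have "exp (- 4) * n \<le> n"
    using assms(1) by (simp add: mult_left_le_one_le)
  then have "n - 1 \<le> 2 * (n - g)"
    using assms(1,3) by argo
  with False show ?thesis
    using assms by (intro cut_base_le_of_deleted_less) auto
qed

lemma one_minus_conn_prob_le_large_deletion:
  fixes n K g :: nat
  defines "d \<equiv> 2 * exp 1 * exp (- (ln n / 12))"
  assumes "2 \<le> n" and "K \<le> n - 1" and "1 \<le> g" and "4 * real g \<le> exp (- 4) * n"
    and "ln n / 3 \<le> real K" and "d < 1"
  shows "1 - conn_prob n K g \<le> d / (1 - d)"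
proof -
  have "exp (- 4) * real n \<le> real n"
    by (simp add: mult_left_le_one_le)
  then have "g \<le> n"
    using assms(5) by simp
  have "1 - conn_prob n K g \<le> (\<Sum>s=1..(n - g) div 2. cut_base (real n - 1) (real n - real g) K (real s) ^ s)"
    by (rule one_minus_conn_prob_le_cut_sum) (use assms(2,3) \<open>g \<le> n\<close> in auto)
  also have "\<dots> \<le> (\<Sum>s=1..(n - g) div 2. d ^ s)"
  proof (intro sum_mono power_mono)
    fix s assume "s \<in> {1..(n - g) div 2}"
    then have "1 \<le> s" "2 * s \<le> n - g"
      by auto
    then have s: "1 \<le> s" "2 * real s \<le> real n - real g"
      using \<open>g \<le> n\<close> by (simp_all flip: of_nat_le_iff of_nat_diff of_nat_mult)
    show "0 \<le> cut_base (real n - 1) (real n - real g) K (real s)"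
      using s assms(2) by (intro cut_base_nonneg) auto
    show "cut_base (real n - 1) (real n - real g) K (real s) \<le> d"
      unfolding d_def using s assms(2,4,5,6) by (intro cut_base_le_decay) auto
  qed
  also have "\<dots> \<le> d ^ 1 / (1 - d)"
    using assms(7) by (intro geometric_sum_le) (auto simp: d_def)
  finally show ?thesis
    by simp
qed

lemma r2_ge_ln:
  assumes "1 \<le> g"
  shows "2 / 3 * ln (real g) \<le> r2 g"
proof -
  have "0 \<le> ln (real g)"
    using assms by simp
  moreover have "0 < ln 2 + 1 / (2::real)" "ln 2 + 1 / 2 \<le> (3 / 2 :: real)"
    using ln_2_less_1 ln_gt_zero[of "2::real"] by linarith+
  ultimately have "ln (real g) / (3 / 2) \<le> ln (real g) / (ln 2 + 1 / 2)"
    by (intro divide_left_mono) auto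
  then show ?thesis
    by (simp add: r2_def)
qed

lemma ln_div_3_le_r2_add:
  assumes "0 < c" and "c * sqrt (real n) \<le> real g" and "1 \<le> n" and "- (2 / 3) * ln c \<le> w"
  shows "ln (real n) / 3 \<le> r2 g + w"
proof -
  have "0 < c * sqrt (real n)"
    using assms(1,3) by simp
  then have "1 \<le> g"
    using assms(2) by simp
  have "ln c + ln (real n) / 2 = ln (c * sqrt (real n))"
    using assms(1,3) by (simp add: ln_mult ln_sqrt)
  also have "\<dots> \<le> ln (real g)"
    using assms(2) \<open>0 < c * sqrt (real n)\<close> by simp
  finally show ?thesis
    using r2_ge_ln[OF \<open>1 \<le> g\<close>] assms(4) by linarith
qed

lemma conn_prob_tendsto_one_if_many_deleted:
  fixes K \<gamma> :: "nat \<Rightarrow> nat" and \<omega> :: "nat \<Rightarrow> real"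
  assumes "eventually (\<lambda>n. K n < n) at_top"
    and "(\<lambda>n. real (\<gamma> n)) \<in> \<Omega>(\<lambda>n. sqrt (real n))" and "(\<lambda>n. real (\<gamma> n)) \<in> o(\<lambda>n. real n)"
    and "\<And>n. real (K n) = r2 (\<gamma> n) + \<omega> n" and "filterlim \<omega> at_top at_top"
  shows "(\<lambda>n. conn_prob n (K n) (\<gamma> n)) \<longlonglongrightarrow> 1"
proof -
  define d where "d n = 2 * exp 1 * exp (- (ln (real n) / 12))" for n :: nat
  have d: "d \<longlonglongrightarrow> 0"
    unfolding d_def by real_asymp
  obtain c where "0 < c" and c: "eventually (\<lambda>n. c * sqrt (real n) \<le> real (\<gamma> n)) at_top"
    using landau_omega.bigE[OF assms(2)] by auto
  have "eventually (\<lambda>n. 4 * real (\<gamma> n) \<le> exp (- 4) * real n) at_top"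
    using landau_o.smallD[OF assms(3), of "exp (- 4) / 4"] by (simp add: mult_ac)
  moreover have "eventually (\<lambda>n. - (2 / 3) * ln c \<le> \<omega> n) at_top"
    using assms(5) by (simp add: filterlim_at_top)
  moreover have "eventually (\<lambda>n. d n < 1) at_top"
    by (rule order_tendstoD(2)[OF d]) simp
  ultimately have "eventually (\<lambda>n. 1 - conn_prob n (K n) (\<gamma> n) \<le> d n / (1 - d n)) at_top"
    using eventually_ge_at_top[of 2] assms(1) c
  proof eventually_elim
    case (elim n)
    have "0 < c * sqrt (real n)"
      using \<open>0 < c\<close> elim by simp
    then have "0 < real (\<gamma> n)"
      using elim by linarith
    then have "1 \<le> \<gamma> n"
      by simp
    have "ln (real n) / 3 \<le> real (K n)"
      using ln_div_3_le_r2_add[OF \<open>0 < c\<close>] elim assms(4)[of n] by simp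
    then show ?case
      unfolding d_def using elim \<open>1 \<le> \<gamma> n\<close>
      by (intro one_minus_conn_prob_le_large_deletion) (auto simp: d_def)
  qed
  moreover have "(\<lambda>n. d n / (1 - d n)) \<longlonglongrightarrow> 0"
    using tendsto_divide[OF d tendsto_diff[OF tendsto_const d]] by simp
  ultimately show ?thesis
    by (intro tendsto_one_if_deficit_le conn_prob_le_one)
qed

theorem theorem3p2:
  fixes K \<gamma> :: "nat \<Rightarrow> nat"
  assumes wd: "eventually (\<lambda>n. K n < n) at_top"
  shows
    "((\<lambda>n. real (\<gamma> n)) \<in> o(\<lambda>n. sqrt (real n)) \<and> (\<forall>n. K n \<ge> 2)
        \<longrightarrow> (\<lambda>n. conn_prob n (K n) (\<gamma> n)) \<longlonglongrightarrow> 1)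
     \<and>
     (\<forall>\<omega> :: nat \<Rightarrow> real.
       (\<lambda>n. real (\<gamma> n)) \<in> \<Omega>(\<lambda>n. sqrt (real n)) \<and>
       (\<lambda>n. real (\<gamma> n)) \<in> o(\<lambda>n. real n) \<and>
       (\<forall>n. real (K n) = r2 (\<gamma> n) + \<omega> n) \<and>
       filterlim \<omega> at_top at_top
       \<longrightarrow> (\<lambda>n. conn_prob n (K n) (\<gamma> n)) \<longlonglongrightarrow> 1)"
proof (intro conjI allI impI)
  assume "(\<lambda>n. real (\<gamma> n)) \<in> o(\<lambda>n. sqrt (real n)) \<and> (\<forall>n. K n \<ge> 2)"
  then show "(\<lambda>n. conn_prob n (K n) (\<gamma> n)) \<longlonglongrightarrow> 1"
    using conn_prob_tendsto_one_if_few_deleted[OF wd] by blast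
next
  fix \<omega> :: "nat \<Rightarrow> real"
  assume "(\<lambda>n. real (\<gamma> n)) \<in> \<Omega>(\<lambda>n. sqrt (real n)) \<and>
    (\<lambda>n. real (\<gamma> n)) \<in> o(\<lambda>n. real n) \<and>
    (\<forall>n. real (K n) = r2 (\<gamma> n) + \<omega> n) \<and>
    filterlim \<omega> at_top at_top"
  then show "(\<lambda>n. conn_prob n (K n) (\<gamma> n)) \<longlonglongrightarrow> 1"
    using conn_prob_tendsto_one_if_many_deleted[OF wd] by blast
qed

end
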